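(* Let $0<c<M$, $\varepsilon,\lambda,\Delta x>0$, $T>0$. Let $(\tau_i(s),u_i(s))_{i\in\mathbb Z}$ and $(\bar\tau_i(s),\bar u_i(s))_{i\in\mathbb Z}$ be measurable in $s\in[0,T)$ with $\tau_i,\bar\tau_i\in[c,M]$, $(\tau_i-\bar\tau_i)_i\in\ell^2(\mathbb Z)$ for each $s$, $\int_0^T\phi^\varepsilon(s)ds<\infty$, and $\|D_{xx}\bar\tau\|_{L^\infty(Q_T)}<\infty$, $\|D_x\bar\tau\|_{L^\infty(Q_T)}<\infty$. Then there is a constant $C>0$ depending only on $p$, $c$, $M$ such that for all $t\in[0,T)$, $$\int_0^t\sum_{i\in\mathbb Z}\Delta x\,R_i^\tau\,ds\le\lambda\Big(C\,\Delta x\,\|D_{xx}\bar\tau\|_{L^\infty(Q_T)}+C\,\|D_x\bar\tau\|_{L^\infty(Q_T)}\Big)\int_0^t\phi^\varepsilon(s)\,ds.$$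
   Context: The pressure $p\in C^2((0,\infty))$ satisfies $p>0$, $p'<0$. Fix $\tau_\star>0$, $P(\tau)=\int_{\tau_\star}^\tau p(s)ds$, $P(\tau|\bar\tau)=P(\tau)-P(\bar\tau)-p(\bar\tau)(\tau-\bar\tau)$. $R_i^\tau=-\frac{\lambda}{2\Delta x}\Big((p(\tau_i)-p(\bar\tau_i))(\tau_{i+1}-2\tau_i+\tau_{i-1})-(\tau_i-\bar\tau_i)p'(\bar\tau_i)(\bar\tau_{i+1}-2\bar\tau_i+\bar\tau_{i-1})\Big)$. $\eta_i^\varepsilon=\frac{\varepsilon^2}{2}(u_i-\bar u_i)^2-P(\tau_i|\bar\tau_i)$, $\phi^\varepsilon(s)=\sum_{i\in\mathbb Z}\Delta x\,\eta_i^\varepsilon(s)$. $Q_T=\mathbb R\times[0,T)$, $\|D_xv\|_{L^\infty(Q_T)}=\sup_{s,i}|\frac{v_{i+1}-v_i}{\Delta x}|$, $\|D_{xx}v\|_{L^\infty(Q_T)}=\sup_{s,i}|\frac{v_{i+1}-2v_i+v_{i-1}}{(\Delta x)^2}|$. *)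

theory Defs
  imports "HOL-Analysis.Analysis"
begin

definition Pprim :: "(real \<Rightarrow> real) \<Rightarrow> real \<Rightarrow> real \<Rightarrow> real" where
  "Pprim p tstar tau = (LBINT s=tstar..tau. p s)"

definition Prel :: "(real \<Rightarrow> real) \<Rightarrow> real \<Rightarrow> real \<Rightarrow> real \<Rightarrow> real" where
  "Prel p tstar tau taub =
     Pprim p tstar tau - Pprim p tstar taub - p taub * (tau - taub)"

definition Rtau :: "(real \<Rightarrow> real) \<Rightarrow> (real \<Rightarrow> real) \<Rightarrow> real \<Rightarrow> real
    \<Rightarrow> (int \<Rightarrow> real \<Rightarrow> real) \<Rightarrow> (int \<Rightarrow> real \<Rightarrow> real) \<Rightarrow> int \<Rightarrow> real \<Rightarrow> real" where
  "Rtau p p' lam dx tau taub i s =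
     - (lam / (2 * dx)) *
       ((p (tau i s) - p (taub i s)) * (tau (i+1) s - 2 * tau i s + tau (i-1) s)
        - (tau i s - taub i s) * p' (taub i s) * (taub (i+1) s - 2 * taub i s + taub (i-1) s))"

definition eta :: "(real \<Rightarrow> real) \<Rightarrow> real \<Rightarrow> real
    \<Rightarrow> (int \<Rightarrow> real \<Rightarrow> real) \<Rightarrow> (int \<Rightarrow> real \<Rightarrow> real)
    \<Rightarrow> (int \<Rightarrow> real \<Rightarrow> real) \<Rightarrow> (int \<Rightarrow> real \<Rightarrow> real) \<Rightarrow> int \<Rightarrow> real \<Rightarrow> real" where
  "eta p tstar eps tau u taub ub i s =
     eps^2 / 2 * (u i s - ub i s)^2 - Prel p tstar (tau i s) (taub i s)"

text \<open>phi^eps(s) = sum_i dx * eta_i^eps(s), as an extended nonnegative real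
  (eta is nonnegative since P is concave; the sum may be infinite).\<close>
definition phi :: "(real \<Rightarrow> real) \<Rightarrow> real \<Rightarrow> real \<Rightarrow> real
    \<Rightarrow> (int \<Rightarrow> real \<Rightarrow> real) \<Rightarrow> (int \<Rightarrow> real \<Rightarrow> real)
    \<Rightarrow> (int \<Rightarrow> real \<Rightarrow> real) \<Rightarrow> (int \<Rightarrow> real \<Rightarrow> real) \<Rightarrow> real \<Rightarrow> ennreal" where
  "phi p tstar eps dx tau u taub ub s =
     (\<integral>\<^sup>+ i. ennreal (dx * eta p tstar eps tau u taub ub i s) \<partial>count_space UNIV)"

definition Dx_set :: "real \<Rightarrow> real \<Rightarrow> (int \<Rightarrow> real \<Rightarrow> real) \<Rightarrow> real set" where
  "Dx_set T dx v = {\<bar>(v (i+1) s - v i s) / dx\<bar> | i s. s \<in> {0..<T}}"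

definition Dxx_set :: "real \<Rightarrow> real \<Rightarrow> (int \<Rightarrow> real \<Rightarrow> real) \<Rightarrow> real set" where
  "Dxx_set T dx v = {\<bar>(v (i+1) s - 2 * v i s + v (i-1) s) / dx^2\<bar> | i s. s \<in> {0..<T}}"

definition Dx_norm :: "real \<Rightarrow> real \<Rightarrow> (int \<Rightarrow> real \<Rightarrow> real) \<Rightarrow> real" where
  "Dx_norm T dx v = Sup (Dx_set T dx v)"

definition Dxx_norm :: "real \<Rightarrow> real \<Rightarrow> (int \<Rightarrow> real \<Rightarrow> real) \<Rightarrow> real" where
  "Dxx_norm T dx v = Sup (Dxx_set T dx v)"

end

theory Submission
  imports Defs
begin

(*
  Write w = tau - taub, g = p(tau) - p(taub) and let D2 denote the second difference. Up to the factor
  -lam/2, dx R_i splits into g_i D2 w_i plus a Taylor remainder of order w_i^2 |D2 taub_i|. Summation by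
  parts turns the sum of g_i D2 w_i into -sum (g_{i+1} - g_i)(w_{i+1} - w_i), and monotonicity of p bounds
  each such term by C |taub_{i+1} - taub_i| (w_i^2 + w_{i+1}^2). Hence the sum of dx R_i is at most
  lam dx (C dx |D_xx taub| + C |D_x taub|) sum w_i^2. Since p' <= -m < 0 on [c, M], the primitive P is
  uniformly concave there, so -P(tau | taub) >= (m/2)(tau - taub)^2 and phi dominates dx (m/2) sum w_i^2.
  Integrating the resulting pointwise bound in time gives the estimate.
*)

lemma abs_diff_le_of_deriv_bound:
  fixes f f' :: "real \<Rightarrow> real"
  assumes "\<And>z. z \<in> {a..b} \<Longrightarrow> (f has_real_derivative f' z) (at z)"
      and "\<And>z. z \<in> {a..b} \<Longrightarrow> \<bar>f' z\<bar> \<le> L"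
      and "x \<in> {a..b}" "y \<in> {a..b}"
  shows "\<bar>f x - f y\<bar> \<le> L * \<bar>x - y\<bar>"
  using field_differentiable_bound[of "{a..b}" f f' L x y] assms
  by (auto intro: has_field_derivative_at_within)

lemma Pprim_has_real_derivative:
  assumes "continuous_on {0<..} p" "tstar > 0" "x > 0"
  shows "(Pprim p tstar has_real_derivative p x) (at x)"
proof -
  define a where "a = min tstar x / 2"
  define b where "b = max tstar x + 1"
  have "continuous_on {a..b} p"
    by (rule continuous_on_subset[OF assms(1)]) (use assms in \<open>auto simp: a_def\<close>)
  then have "((\<lambda>y. LBINT s=tstar..y. p s) has_vector_derivative p x) (at x within {a..b})"
    by (intro interval_integral_FTC2) (use assms in \<open>auto simp: a_def b_def min_def\<close>)
  then have "((\<lambda>y. LBINT s=tstar..y. p s) has_vector_derivative p x) (at x within {a<..<b})"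
    by (rule has_vector_derivative_within_subset) auto
  then have "((\<lambda>y. LBINT s=tstar..y. p s) has_vector_derivative p x) (at x)"
    by (subst (asm) has_vector_derivative_within_open) (use assms in \<open>auto simp: a_def b_def\<close>)
  then show ?thesis
    by (simp add: has_real_derivative_iff_has_vector_derivative Pprim_def[abs_def])
qed

lemma summable_on_real_if_abs_le:
  fixes f g :: "'a \<Rightarrow> real"
  assumes "g summable_on A" "\<And>x. x \<in> A \<Longrightarrow> \<bar>f x\<bar> \<le> g x"
  shows "f summable_on A"
proof -
  have "(\<lambda>x. norm (f x)) summable_on A"
    by (rule summable_on_comparison_test[OF assms(1)]) (use assms(2) in auto)
  then show ?thesis
    by (rule summable_on_iff_abs_summable_on_real[THEN iffD2])
qed

lemma summable_on_mult_if_squares_summable: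
  fixes f g :: "'a \<Rightarrow> real"
  assumes "(\<lambda>x. (f x)^2) summable_on A" "(\<lambda>x. (g x)^2) summable_on A"
  shows "(\<lambda>x. f x * g x) summable_on A"
proof (rule summable_on_real_if_abs_le[OF summable_on_add[OF assms]])
  fix x
  have "2 * (\<bar>f x\<bar> * \<bar>g x\<bar>) \<le> (f x)^2 + (g x)^2"
    using sum_squares_bound[of "\<bar>f x\<bar>" "\<bar>g x\<bar>"] by (simp add: power2_eq_square)
  moreover have "0 \<le> \<bar>f x\<bar> * \<bar>g x\<bar>" by simp
  ultimately show "\<bar>f x * g x\<bar> \<le> (f x)^2 + (g x)^2"
    unfolding abs_mult by linarith
qed

lemma summable_on_square_diff:
  fixes f g :: "'a \<Rightarrow> real"
  assumes "(\<lambda>x. (f x)^2) summable_on A" "(\<lambda>x. (g x)^2) summable_on A"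
  shows "(\<lambda>x. (f x - g x)^2) summable_on A"
proof (rule summable_on_comparison_test)
  show "(\<lambda>x. 2 * (f x)^2 + 2 * (g x)^2) summable_on A"
    by (intro summable_on_add summable_on_cmult_right assms)
  fix x
  have "2 * (f x)^2 + 2 * (g x)^2 - (f x - g x)^2 = (f x + g x)^2"
    by (simp add: power2_eq_square algebra_simps)
  then show "(f x - g x)^2 \<le> 2 * (f x)^2 + 2 * (g x)^2"
    using zero_le_power2[of "f x + g x"] by linarith
qed simp

lemma has_sum_shift_int:
  "((\<lambda>i::int. f (i + k)) has_sum S) UNIV \<longleftrightarrow> (f has_sum S) UNIV"
  by (rule has_sum_reindex_bij_betw) (rule bij_betwI[where g="\<lambda>i. i - k"], auto)

lemma infsum_shift_int: "(\<Sum>\<^sub>\<infinity>i::int. f (i + k)) = (\<Sum>\<^sub>\<infinity>i. f i)"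
  by (rule infsum_reindex_bij_betw) (rule bij_betwI[where g="\<lambda>i. i - k"], auto)

lemma summable_on_shift_int:
  "(\<lambda>i::int. f (i + k)) summable_on UNIV \<longleftrightarrow> f summable_on UNIV"
  unfolding summable_on_def by (simp add: has_sum_shift_int)

lemma summation_by_parts_int:
  fixes g w :: "int \<Rightarrow> real"
  assumes "(\<lambda>i. g i * (w (i+1) - w i)) summable_on UNIV"
      and "(\<lambda>i. g (i+1) * (w (i+1) - w i)) summable_on UNIV"
  shows "((\<lambda>i. g i * (w (i+1) - 2 * w i + w (i-1))) has_sum
           - (\<Sum>\<^sub>\<infinity>i. (g (i+1) - g i) * (w (i+1) - w i))) UNIV"
proof -
  define A where "A i = g i * (w (i+1) - w i)" for i
  define B where "B i = g (i+1) * (w (i+1) - w i)" for i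
  have hA: "(A has_sum infsum A UNIV) UNIV" and hB: "(B has_sum infsum B UNIV) UNIV"
    using assms by (simp_all add: A_def[abs_def] B_def[abs_def])
  have "((\<lambda>i. - B (i - 1)) has_sum - infsum B UNIV) UNIV"
    using hB has_sum_shift_int[of B "-1"] by (simp add: has_sum_uminus)
  from has_sum_add[OF hA this]
  have AB: "((\<lambda>i. A i - B (i - 1)) has_sum (infsum A UNIV - infsum B UNIV)) UNIV"
    by simp
  have "((\<lambda>i. - A i) has_sum - infsum A UNIV) UNIV"
    using hA by (simp add: has_sum_uminus)
  from has_sum_add[OF hB this]
  have BA: "((\<lambda>i. B i - A i) has_sum (infsum B UNIV - infsum A UNIV)) UNIV"
    by simp
  have "(\<lambda>i. g i * (w (i+1) - 2 * w i + w (i-1))) = (\<lambda>i. A i - B (i - 1))"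
    and "(\<lambda>i. (g (i+1) - g i) * (w (i+1) - w i)) = (\<lambda>i. B i - A i)"
    by (simp_all add: A_def B_def fun_eq_iff algebra_simps)
  with AB infsumI[OF BA] show ?thesis
    by simp
qed

lemma nn_integral_count_space_eq_infsum:
  fixes f :: "'a \<Rightarrow> real"
  assumes "f summable_on UNIV" "\<And>x. f x \<ge> 0"
  shows "(\<integral>\<^sup>+x. ennreal (f x) \<partial>count_space UNIV) = ennreal (\<Sum>\<^sub>\<infinity>x. f x)"
proof -
  have "Infinite_Set_Sum.abs_summable_on f UNIV"
    using assms abs_summable_equivalent by fastforce
  then show ?thesis
    using nn_integral_conv_infsetsum infsetsum_infsum assms(2) by metis
qed

text \<open>Unlike \<open>nn_integral_cmult\<close>, only the smaller function needs to be measurable.\<close>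
lemma nn_integral_le_cmult:
  assumes f: "f \<in> borel_measurable M" and K: "K \<ge> 0"
      and le: "\<And>x. f x \<le> ennreal K * g x"
  shows "integral\<^sup>N M f \<le> ennreal K * integral\<^sup>N M g"
proof (cases "K = 0")
  case True
  with le have "f = (\<lambda>_. 0)"
    by (simp add: fun_eq_iff)
  then show ?thesis by simp
next
  case False
  then have Kinv: "ennreal (1/K) * ennreal K = 1"
    using K by (simp flip: ennreal_mult)
  have "ennreal (1/K) * integral\<^sup>N M f = (\<integral>\<^sup>+x. ennreal (1/K) * f x \<partial>M)"
    by (rule nn_integral_cmult[symmetric, OF f])
  also have "\<dots> \<le> integral\<^sup>N M g"
  proof (rule nn_integral_mono)
    fix x
    have "ennreal (1/K) * f x \<le> ennreal (1/K) * (ennreal K * g x)"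
      by (rule mult_left_mono[OF le]) simp
    also have "\<dots> = g x"
      by (simp only: mult.assoc[symmetric] Kinv mult_1)
    finally show "ennreal (1/K) * f x \<le> g x" .
  qed
  finally have "ennreal K * (ennreal (1/K) * integral\<^sup>N M f) \<le> ennreal K * integral\<^sup>N M g"
    by (rule mult_left_mono) simp
  then show ?thesis
    by (simp only: mult.assoc[symmetric] mult.commute[of "ennreal K"] Kinv mult_1)
qed

lemma set_integral_le_if_nn_bound:
  fixes f :: "'a \<Rightarrow> real" and g :: "'a \<Rightarrow> ennreal"
  assumes K: "K \<ge> 0"
      and bound: "\<And>x. x \<in> A \<Longrightarrow> ennreal (max (f x) 0) \<le> ennreal K * g x"
      and finite: "set_nn_integral M A g < \<infinity>"
  shows "(LINT x:A|M. f x) \<le> K * enn2real (set_nn_integral M A g)"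
proof (cases "integrable M (\<lambda>x. indicator A x *\<^sub>R f x)")
  case False
  then show ?thesis
    using K by (simp add: set_lebesgue_integral_def not_integrable_integral_eq)
next
  case True
  define F where "F x = indicator A x *\<^sub>R f x" for x
  have [measurable]: "F \<in> borel_measurable M"
    using True unfolding F_def[abs_def] by (rule borel_measurable_integrable)
  have nn: "(\<integral>\<^sup>+x. ennreal (max (F x) 0) \<partial>M) \<le> ennreal K * set_nn_integral M A g"
  proof (rule nn_integral_le_cmult[OF _ K])
    show "ennreal (max (F x) 0) \<le> ennreal K * (g x * indicator A x)" for x
      using bound[of x] by (cases "x \<in> A") (simp_all add: F_def)
  qed measurable
  have "(LINT x:A|M. f x) \<le> integral\<^sup>L M (\<lambda>x. max (F x) 0)"
    unfolding set_lebesgue_integral_def F_def[symmetric]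
    by (rule integral_mono) (use True in \<open>auto simp: F_def\<close>)
  also have "\<dots> = enn2real (\<integral>\<^sup>+x. ennreal (max (F x) 0) \<partial>M)"
    by (rule integral_eq_nn_integral) auto
  also have "\<dots> \<le> enn2real (ennreal K * set_nn_integral M A g)"
    by (rule enn2real_mono[OF nn]) (use finite in \<open>simp add: ennreal_mult_less_top\<close>)
  also have "\<dots> = K * enn2real (set_nn_integral M A g)"
    using K by (simp add: enn2real_mult)
  finally show ?thesis .
qed

lemma Dx_norm_bound:
  assumes "bdd_above (Dx_set T dx v)" "dx > 0" "s \<in> {0..<T}"
  shows "\<bar>v (i+1) s - v i s\<bar> \<le> dx * Dx_norm T dx v"
proof -
  have "\<bar>(v (i+1) s - v i s) / dx\<bar> \<le> Dx_norm T dx v"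
    unfolding Dx_norm_def by (rule cSup_upper[OF _ assms(1)]) (use assms(3) in \<open>auto simp: Dx_set_def\<close>)
  then show ?thesis
    using assms(2) by (simp add: abs_divide pos_divide_le_eq mult.commute)
qed

lemma Dxx_norm_bound:
  assumes "bdd_above (Dxx_set T dx v)" "dx > 0" "s \<in> {0..<T}"
  shows "\<bar>v (i+1) s - 2 * v i s + v (i-1) s\<bar> \<le> dx^2 * Dxx_norm T dx v"
proof -
  have "\<bar>(v (i+1) s - 2 * v i s + v (i-1) s) / dx^2\<bar> \<le> Dxx_norm T dx v"
    unfolding Dxx_norm_def by (rule cSup_upper[OF _ assms(1)]) (use assms(3) in \<open>auto simp: Dxx_set_def\<close>)
  then show ?thesis
    using assms(2) by (simp add: abs_divide pos_divide_le_eq mult.commute)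
qed

lemma Dx_norm_nonneg:
  assumes "bdd_above (Dx_set T dx v)" "T > 0"
  shows "Dx_norm T dx v \<ge> 0"
proof -
  have "\<bar>(v (0+1) 0 - v 0 0) / dx\<bar> \<in> Dx_set T dx v"
    unfolding Dx_set_def using assms(2) by fastforce
  from cSup_upper[OF this assms(1)] show ?thesis
    unfolding Dx_norm_def by (meson abs_ge_zero order_trans)
qed

lemma Dxx_norm_nonneg:
  assumes "bdd_above (Dxx_set T dx v)" "T > 0"
  shows "Dxx_norm T dx v \<ge> 0"
proof -
  have "\<bar>(v (0+1) 0 - 2 * v 0 0 + v (0-1) 0) / dx^2\<bar> \<in> Dxx_set T dx v"
    unfolding Dxx_set_def using assms(2) by fastforce
  from cSup_upper[OF this assms(1)] show ?thesis
    unfolding Dxx_norm_def by (meson abs_ge_zero order_trans)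
qed

lemma square_abs_add_le: "(\<bar>x\<bar> + \<bar>y\<bar>)^2 \<le> 2 * (x^2 + y^2)" for x y :: real
proof -
  have "2 * (\<bar>x\<bar> * \<bar>y\<bar>) \<le> x^2 + y^2"
    using sum_squares_bound[of "\<bar>x\<bar>" "\<bar>y\<bar>"] by (simp add: power2_eq_square)
  then show ?thesis
    by (simp add: power2_sum)
qed

lemma second_difference_sum_bound:
  fixes g w :: "int \<Rightarrow> real"
  assumes g: "(\<lambda>i. (g i)^2) summable_on UNIV" and w: "(\<lambda>i. (w i)^2) summable_on UNIV"
      and incr: "\<And>i. (g (i+1) - g i) * (w (i+1) - w i) \<le> K * ((w i)^2 + (w (i+1))^2)"
  shows "(\<lambda>i. g i * (w (i+1) - 2 * w i + w (i-1))) summable_on UNIV"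
    and "- (\<Sum>\<^sub>\<infinity>i. g i * (w (i+1) - 2 * w i + w (i-1))) \<le> 2 * K * (\<Sum>\<^sub>\<infinity>i. (w i)^2)"
proof -
  have w_shift: "(\<lambda>i. (w (i+1))^2) summable_on UNIV"
    using w by (simp add: summable_on_shift_int[of "\<lambda>i. (w i)^2"])
  have g_shift: "(\<lambda>i. (g (i+1))^2) summable_on UNIV"
    using g by (simp add: summable_on_shift_int[of "\<lambda>i. (g i)^2"])
  have dw: "(\<lambda>i. (w (i+1) - w i)^2) summable_on UNIV"
    by (rule summable_on_square_diff[OF w_shift w])
  have dg: "(\<lambda>i. (g (i+1) - g i)^2) summable_on UNIV"
    by (rule summable_on_square_diff[OF g_shift g])
  have sbp: "((\<lambda>i. g i * (w (i+1) - 2 * w i + w (i-1))) has_sum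
      - (\<Sum>\<^sub>\<infinity>i. (g (i+1) - g i) * (w (i+1) - w i))) UNIV"
    by (intro summation_by_parts_int summable_on_mult_if_squares_summable g g_shift dw)
  then show "(\<lambda>i. g i * (w (i+1) - 2 * w i + w (i-1))) summable_on UNIV"
    by (rule has_sum_imp_summable)
  have "(\<Sum>\<^sub>\<infinity>i. (g (i+1) - g i) * (w (i+1) - w i)) \<le> (\<Sum>\<^sub>\<infinity>i. K * ((w i)^2 + (w (i+1))^2))"
    by (intro infsum_mono summable_on_mult_if_squares_summable summable_on_cmult_right
        summable_on_add dg dw w w_shift incr)
  also have "\<dots> = 2 * K * (\<Sum>\<^sub>\<infinity>i. (w i)^2)"
    using w w_shift
    by (simp add: infsum_cmult_right' infsum_add infsum_shift_int[of "\<lambda>i. (w i)^2"])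
  finally show "- (\<Sum>\<^sub>\<infinity>i. g i * (w (i+1) - 2 * w i + w (i-1))) \<le> 2 * K * (\<Sum>\<^sub>\<infinity>i. (w i)^2)"
    using infsumI[OF sbp] by simp
qed

lemma dx_mult_Rtau_split:
  assumes "dx > 0"
  shows "dx * Rtau p p' lam dx tau taub i s
    = - (lam/2) * ((p (tau i s) - p (taub i s))
          * ((tau (i+1) s - taub (i+1) s) - 2 * (tau i s - taub i s) + (tau (i-1) s - taub (i-1) s)))
      + - (lam/2) * ((p (tau i s) - p (taub i s) - p' (taub i s) * (tau i s - taub i s))
          * (taub (i+1) s - 2 * taub i s + taub (i-1) s))"
proof -
  define X where "X = (p (tau i s) - p (taub i s)) * (tau (i+1) s - 2 * tau i s + tau (i-1) s)
      - (tau i s - taub i s) * p' (taub i s) * (taub (i+1) s - 2 * taub i s + taub (i-1) s)"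
  have "dx * Rtau p p' lam dx tau taub i s = dx * (- (lam / (2 * dx)) * X)"
    by (simp only: Rtau_def X_def)
  also have "\<dots> = - (lam/2) * X"
    using assms by simp
  finally show ?thesis
    unfolding X_def by (simp add: algebra_simps)
qed

locale pressure_bounds =
  fixes p p' p'' :: "real \<Rightarrow> real" and c M m L1 L2 :: real
  assumes p_deriv: "\<And>x. x > 0 \<Longrightarrow> (p has_real_derivative p' x) (at x)"
    and p'_deriv: "\<And>x. x > 0 \<Longrightarrow> (p' has_real_derivative p'' x) (at x)"
    and p'_neg: "\<And>x. x > 0 \<Longrightarrow> p' x < 0"
    and c_pos: "0 < c" and c_less_M: "c < M"
    and m_pos: "0 < m"
    and p'_le_neg_m: "\<And>x. x \<in> {c..M} \<Longrightarrow> p' x \<le> - m"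
    and abs_p'_le: "\<And>x. x \<in> {c..M} \<Longrightarrow> \<bar>p' x\<bar> \<le> L1"
    and abs_p''_le: "\<And>x. x \<in> {c/2..M + c/2} \<Longrightarrow> \<bar>p'' x\<bar> \<le> L2"
      \<comment> \<open>the enlarged interval absorbs the shifts of less than \<open>c/2\<close> in \<open>p_increment_shift\<close>\<close>
begin

lemma L1_nonneg: "0 \<le> L1"
  using abs_p'_le[of c] c_less_M by force

lemma L2_nonneg: "0 \<le> L2"
  using abs_p''_le[of c] c_pos c_less_M by force

lemma p_continuous: "continuous_on {0<..} p"
  by (rule continuous_at_imp_continuous_on) (auto intro: DERIV_isCont p_deriv)

lemma p_lipschitz:
  assumes "a \<in> {c..M}" "b \<in> {c..M}"
  shows "\<bar>p a - p b\<bar> \<le> L1 * \<bar>a - b\<bar>"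
  by (rule abs_diff_le_of_deriv_bound[OF p_deriv abs_p'_le assms]) (use c_pos in auto)

lemma p'_lipschitz:
  assumes "a \<in> {c/2..M + c/2}" "b \<in> {c/2..M + c/2}"
  shows "\<bar>p' a - p' b\<bar> \<le> L2 * \<bar>a - b\<bar>"
  by (rule abs_diff_le_of_deriv_bound[OF p'_deriv abs_p''_le assms]) (use c_pos in auto)

lemma p_taylor_remainder:
  assumes a: "a \<in> {c..M}" and b: "b \<in> {c..M}"
  shows "\<bar>p a - p b - p' b * (a - b)\<bar> \<le> L2 * (a - b)^2"
proof -
  define f where "f x = p x - p' b * x" for x
  have "\<bar>f a - f b\<bar> \<le> (L2 * \<bar>a - b\<bar>) * \<bar>a - b\<bar>"
  proof (rule abs_diff_le_of_deriv_bound[where f' = "\<lambda>x. p' x - p' b"])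
    fix x assume x: "x \<in> {min a b..max a b}"
    then have "x > 0" using a b c_pos by auto
    then show "(f has_real_derivative p' x - p' b) (at x)"
      unfolding f_def by (auto intro!: derivative_eq_intros p_deriv)
    have "\<bar>p' x - p' b\<bar> \<le> L2 * \<bar>x - b\<bar>"
      by (rule p'_lipschitz) (use x a b c_pos in auto)
    also have "\<dots> \<le> L2 * \<bar>a - b\<bar>"
      by (rule mult_left_mono) (use x L2_nonneg in auto)
    finally show "\<bar>p' x - p' b\<bar> \<le> L2 * \<bar>a - b\<bar>" .
  qed auto
  then show ?thesis
    by (simp add: f_def power2_eq_square algebra_simps abs_mult)
qed

lemma p_antimono:
  assumes "0 < x" "x \<le> y"
  shows "p y \<le> p x"
proof (rule DERIV_nonpos_imp_nonincreasing[OF assms(2)])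
  fix z assume "x \<le> z" "z \<le> y"
  then have "z > 0" using assms by simp
  then show "\<exists>d. (p has_real_derivative d) (at z) \<and> d \<le> 0"
    using p_deriv p'_neg less_imp_le by blast
qed

lemma p_diff_mult_diff_nonpos:
  assumes "0 < x" "0 < y"
  shows "(p x - p y) * (x - y) \<le> 0"
  using p_antimono[of x y] p_antimono[of y x] assms
  by (cases "x \<le> y") (auto intro: mult_nonneg_nonpos mult_nonpos_nonneg)

lemma p_increment_shift:
  assumes b: "b \<in> {c..M}" and b': "b' \<in> {c..M}" and bw': "b' + w \<in> {c..M}"
      and close: "\<bar>b' - b\<bar> < c/2"
  shows "\<bar>(p (b' + w) - p b') - (p (b + w) - p b)\<bar> \<le> L2 * \<bar>w\<bar> * \<bar>b' - b\<bar>"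
proof -
  define f where "f x = p (x + w) - p x" for x
  have "\<bar>f b' - f b\<bar> \<le> (L2 * \<bar>w\<bar>) * \<bar>b' - b\<bar>"
  proof (rule abs_diff_le_of_deriv_bound[where f' = "\<lambda>x. p' (x + w) - p' x"])
    fix x assume x: "x \<in> {min b b'..max b b'}"
    then have "\<bar>x - b'\<bar> \<le> \<bar>b' - b\<bar>" by auto
    then have xw: "x + w \<in> {c/2..M + c/2}"
      using close bw' by (auto simp: abs_le_iff abs_less_iff)
    moreover have x_range: "x \<in> {c/2..M + c/2}" using x b b' c_pos by auto
    ultimately show "(f has_real_derivative p' (x + w) - p' x) (at x)"
      unfolding f_def using c_pos
      by (auto intro!: derivative_eq_intros p_deriv DERIV_chain2[OF p_deriv])
    show "\<bar>p' (x + w) - p' x\<bar> \<le> L2 * \<bar>w\<bar>"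
      using p'_lipschitz[OF xw x_range] by simp
  qed auto
  then show ?thesis
    by (simp add: f_def algebra_simps)
qed

definition increment_const :: real where
  "increment_const = max (2 * L2) (4 * L1 / c)"

lemma increment_const_nonneg: "0 \<le> increment_const"
  using L2_nonneg by (simp add: increment_const_def le_max_iff_disj)

text \<open>With \<open>w = a - b\<close>, \<open>w' = a' - b'\<close>, compare both increments at the common base point \<open>b\<close>:
  the main term \<open>(p (b + w') - p (b + w)) * (w' - w)\<close> is nonpositive because \<open>p\<close> decreases,
  and only the second-order defect of \<open>p_increment_shift\<close> remains.\<close>
lemma p_increment_diff_bound_close:
  assumes a: "a \<in> {c..M}" and b: "b \<in> {c..M}" and a': "a' \<in> {c..M}" and b': "b' \<in> {c..M}"
      and close: "\<bar>b' - b\<bar> < c/2"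
  shows "((p a' - p b') - (p a - p b)) * ((a' - b') - (a - b))
           \<le> 2 * L2 * \<bar>b' - b\<bar> * ((a - b)^2 + (a' - b')^2)"
proof -
  define w where "w = a - b"
  define w' where "w' = a' - b'"
  define E where "E = (p (b' + w') - p b') - (p (b + w') - p b)"
  have "b' - b < c/2"
    using close abs_ge_self[of "b' - b"] by linarith
  then have "b + w > 0" "b + w' > 0"
    using a b a' b' c_pos by (auto simp: w_def w'_def)
  then have mono: "(p (b + w') - p (b + w)) * (w' - w) \<le> 0"
    using p_diff_mult_diff_nonpos by fastforce
  have E: "\<bar>E\<bar> \<le> L2 * \<bar>w'\<bar> * \<bar>b' - b\<bar>"
    unfolding E_def by (rule p_increment_shift[OF b b' _ close]) (use a' in \<open>simp add: w'_def\<close>)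
  have "((p a' - p b') - (p a - p b)) * ((a' - b') - (a - b))
      = (p (b + w') - p (b + w)) * (w' - w) + E * (w' - w)"
    by (simp add: E_def w_def w'_def algebra_simps)
  also have "\<dots> \<le> \<bar>E\<bar> * \<bar>w' - w\<bar>"
    using mono by (simp add: abs_mult[symmetric])
  also have "\<dots> \<le> (L2 * \<bar>b' - b\<bar>) * (\<bar>w\<bar> + \<bar>w'\<bar>)^2"
  proof -
    have "\<bar>w'\<bar> * \<bar>w' - w\<bar> \<le> (\<bar>w\<bar> + \<bar>w'\<bar>) * (\<bar>w\<bar> + \<bar>w'\<bar>)"
      by (intro mult_mono) auto
    then have "(L2 * \<bar>b' - b\<bar>) * (\<bar>w'\<bar> * \<bar>w' - w\<bar>) \<le> (L2 * \<bar>b' - b\<bar>) * (\<bar>w\<bar> + \<bar>w'\<bar>)^2"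
      by (intro mult_left_mono) (auto simp: power2_eq_square L2_nonneg)
    moreover have "\<bar>E\<bar> * \<bar>w' - w\<bar> \<le> (L2 * \<bar>w'\<bar> * \<bar>b' - b\<bar>) * \<bar>w' - w\<bar>"
      by (rule mult_right_mono[OF E]) simp
    ultimately show ?thesis
      by (simp add: algebra_simps)
  qed
  also have "\<dots> \<le> (L2 * \<bar>b' - b\<bar>) * (2 * (w^2 + w'^2))"
    by (rule mult_left_mono[OF square_abs_add_le]) (simp add: L2_nonneg)
  finally show ?thesis
    by (simp add: w_def w'_def algebra_simps)
qed

lemma p_increment_diff_bound_far:
  assumes a: "a \<in> {c..M}" and b: "b \<in> {c..M}" and a': "a' \<in> {c..M}" and b': "b' \<in> {c..M}"
      and far: "c/2 \<le> \<bar>b' - b\<bar>"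
  shows "((p a' - p b') - (p a - p b)) * ((a' - b') - (a - b))
           \<le> (4 * L1 / c) * \<bar>b' - b\<bar> * ((a - b)^2 + (a' - b')^2)"
proof -
  define w where "w = a - b"
  define w' where "w' = a' - b'"
  have "((p a' - p b') - (p a - p b)) * ((a' - b') - (a - b))
      \<le> \<bar>(p a' - p b') - (p a - p b)\<bar> * \<bar>w' - w\<bar>"
    by (simp add: w_def w'_def abs_mult[symmetric])
  also have "\<dots> \<le> (L1 * (\<bar>w\<bar> + \<bar>w'\<bar>)) * (\<bar>w\<bar> + \<bar>w'\<bar>)"
  proof (rule mult_mono)
    show "\<bar>(p a' - p b') - (p a - p b)\<bar> \<le> L1 * (\<bar>w\<bar> + \<bar>w'\<bar>)"
      using p_lipschitz[OF a b] p_lipschitz[OF a' b'] by (simp add: w_def w'_def distrib_left)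
  qed (auto simp: L1_nonneg)
  also have "\<dots> \<le> L1 * (2 * (w^2 + w'^2))"
    using mult_left_mono[OF square_abs_add_le L1_nonneg] by (simp add: power2_eq_square mult.assoc)
  also have "\<dots> \<le> (4 * L1 / c) * \<bar>b' - b\<bar> * (w^2 + w'^2)"
  proof -
    have "L1 * 2 \<le> (4 * L1 / c) * \<bar>b' - b\<bar>"
      using mult_left_mono[OF far, of "4 * L1 / c"] c_pos L1_nonneg by simp
    from mult_right_mono[OF this, of "w^2 + w'^2"] show ?thesis
      by (simp add: algebra_simps)
  qed
  finally show ?thesis
    by (simp add: w_def w'_def)
qed

lemma p_increment_diff_bound:
  assumes "a \<in> {c..M}" "b \<in> {c..M}" "a' \<in> {c..M}" "b' \<in> {c..M}"
  shows "((p a' - p b') - (p a - p b)) * ((a' - b') - (a - b))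
           \<le> increment_const * \<bar>b' - b\<bar> * ((a - b)^2 + (a' - b')^2)"
proof (cases "\<bar>b' - b\<bar> < c/2")
  case True
  from p_increment_diff_bound_close[OF assms True] show ?thesis
    by (rule order_trans) (intro mult_right_mono, auto simp: increment_const_def)
next
  case False
  then have "c/2 \<le> \<bar>b' - b\<bar>"
    by simp
  from p_increment_diff_bound_far[OF assms this] show ?thesis
    by (rule order_trans) (intro mult_right_mono, auto simp: increment_const_def)
qed

lemma Prel_le_neg_square:
  assumes "tstar > 0" and x: "x \<in> {c..M}" and y: "y \<in> {c..M}"
  shows "Prel p tstar y x \<le> - (m/2) * (y - x)^2"
proof -
  define \<psi> where "\<psi> z = Pprim p tstar z - Pprim p tstar x - p x * (z - x) + m/2 * (z - x)^2" for z
  have d\<psi>: "(\<psi> has_real_derivative (p z + m * z) - (p x + m * x)) (at z)" if "z > 0" for z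
    unfolding \<psi>_def using that
    by (auto intro!: derivative_eq_intros Pprim_has_real_derivative[OF p_continuous assms(1)]
        simp: power2_eq_square algebra_simps)
  \<comment> \<open>\<open>p z + m z\<close> is nonincreasing on \<open>[c, M]\<close>, so \<open>\<psi>\<close> has its maximum at \<open>x\<close>.\<close>
  have pm: "p v + m * v \<le> p u + m * u" if "c \<le> u" "u \<le> v" "v \<le> M" for u v
  proof (rule DERIV_nonpos_imp_nonincreasing[OF that(2)])
    fix z assume "u \<le> z" "z \<le> v"
    with that c_pos have "z > 0" "p' z + m \<le> 0" using p'_le_neg_m[of z] by auto
    then show "\<exists>d. ((\<lambda>z. p z + m * z) has_real_derivative d) (at z) \<and> d \<le> 0"
      by (intro exI[of _ "p' z + m"]) (auto intro!: derivative_eq_intros p_deriv)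
  qed
  have "\<psi> y \<le> \<psi> x"
  proof (cases "x \<le> y")
    case True
    show ?thesis
    proof (rule DERIV_nonpos_imp_nonincreasing[OF True])
      fix z assume "x \<le> z" "z \<le> y"
      then show "\<exists>d. (\<psi> has_real_derivative d) (at z) \<and> d \<le> 0"
        using d\<psi>[of z] pm[of x z] x y c_pos by auto
    qed
  next
    case False
    show ?thesis
    proof (rule DERIV_nonneg_imp_nondecreasing[of y x])
      fix z assume "y \<le> z" "z \<le> x"
      then show "\<exists>d. (\<psi> has_real_derivative d) (at z) \<and> d \<ge> 0"
        using d\<psi>[of z] pm[of z x] x y c_pos by auto
    qed (use False in simp)
  qed
  then show ?thesis
    by (simp add: \<psi>_def Prel_def algebra_simps)
qed

lemma taylor_term_sum_bound:
  fixes tau taub :: "int \<Rightarrow> real \<Rightarrow> real"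
  assumes range: "\<And>i. tau i s \<in> {c..M}" "\<And>i. taub i s \<in> {c..M}"
      and sq: "(\<lambda>i. (tau i s - taub i s)^2) summable_on UNIV"
      and D2: "\<And>i. \<bar>taub (i+1) s - 2 * taub i s + taub (i-1) s\<bar> \<le> dx^2 * D2"
  defines "h i \<equiv> (p (tau i s) - p (taub i s) - p' (taub i s) * (tau i s - taub i s))
                    * (taub (i+1) s - 2 * taub i s + taub (i-1) s)"
  shows "h summable_on UNIV"
    and "- (\<Sum>\<^sub>\<infinity>i. h i) \<le> L2 * dx^2 * D2 * (\<Sum>\<^sub>\<infinity>i. (tau i s - taub i s)^2)"
proof -
  have h_le: "\<bar>h i\<bar> \<le> (L2 * dx^2 * D2) * (tau i s - taub i s)^2" for i
  proof -
    have "\<bar>p (tau i s) - p (taub i s) - p' (taub i s) * (tau i s - taub i s)\<bar> \<le> L2 * (tau i s - taub i s)^2"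
      by (rule p_taylor_remainder) (use range in auto)
    then have "\<bar>p (tau i s) - p (taub i s) - p' (taub i s) * (tau i s - taub i s)\<bar>
        * \<bar>taub (i+1) s - 2 * taub i s + taub (i-1) s\<bar> \<le> (L2 * (tau i s - taub i s)^2) * (dx^2 * D2)"
      by (rule mult_mono[OF _ D2[of i]]) (simp_all add: L2_nonneg)
    then show ?thesis
      by (simp add: h_def abs_mult mult_ac)
  qed
  show h: "h summable_on UNIV"
    by (rule summable_on_real_if_abs_le[OF summable_on_cmult_right[OF sq] h_le])
  have "- (\<Sum>\<^sub>\<infinity>i. h i) \<le> (\<Sum>\<^sub>\<infinity>i. (L2 * dx^2 * D2) * (tau i s - taub i s)^2)"
    unfolding infsum_uminus[symmetric]
  proof (rule infsum_mono)
    show "(\<lambda>i. - h i) summable_on UNIV"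
      using h by (simp add: summable_on_uminus)
    show "(\<lambda>i. (L2 * dx^2 * D2) * (tau i s - taub i s)^2) summable_on UNIV"
      by (rule summable_on_cmult_right[OF sq])
    show "- h i \<le> (L2 * dx^2 * D2) * (tau i s - taub i s)^2" for i
      using h_le[of i] by linarith
  qed
  then show "- (\<Sum>\<^sub>\<infinity>i. h i) \<le> L2 * dx^2 * D2 * (\<Sum>\<^sub>\<infinity>i. (tau i s - taub i s)^2)"
    by (simp add: infsum_cmult_right')
qed

lemma infsum_Rtau_le:
  fixes tau taub :: "int \<Rightarrow> real \<Rightarrow> real"
  assumes range: "\<And>i. tau i s \<in> {c..M}" "\<And>i. taub i s \<in> {c..M}"
      and sq: "(\<lambda>i. (tau i s - taub i s)^2) summable_on UNIV"
      and D1: "\<And>i. \<bar>taub (i+1) s - taub i s\<bar> \<le> dx * D1"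
      and D2: "\<And>i. \<bar>taub (i+1) s - 2 * taub i s + taub (i-1) s\<bar> \<le> dx^2 * D2"
      and dx: "dx > 0" and lam: "lam > 0"
  shows "(\<Sum>\<^sub>\<infinity>i. dx * Rtau p p' lam dx tau taub i s)
           \<le> lam * dx * (L2/2 * dx * D2 + increment_const * D1) * (\<Sum>\<^sub>\<infinity>i. (tau i s - taub i s)^2)"
proof -
  define w where "w i = tau i s - taub i s" for i
  define g where "g i = p (tau i s) - p (taub i s)" for i
  define h where "h i = (g i - p' (taub i s) * w i) * (taub (i+1) s - 2 * taub i s + taub (i-1) s)" for i
  define S where "S = (\<Sum>\<^sub>\<infinity>i. (w i)^2)"
  have w: "(\<lambda>i. (w i)^2) summable_on UNIV"
    using sq by (simp add: w_def)
  have g: "(\<lambda>i. (g i)^2) summable_on UNIV"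
  proof (rule summable_on_comparison_test[OF summable_on_cmult_right[OF w, of "L1^2"]])
    fix i
    have "\<bar>g i\<bar> \<le> L1 * \<bar>w i\<bar>"
      unfolding g_def w_def by (rule p_lipschitz) (use range in auto)
    from power_mono[OF this abs_ge_zero, of 2] show "(g i)^2 \<le> L1^2 * (w i)^2"
      by (simp add: power_mult_distrib)
  qed simp
  have incr: "(g (i+1) - g i) * (w (i+1) - w i) \<le> (increment_const * (dx * D1)) * ((w i)^2 + (w (i+1))^2)" for i
  proof -
    have "(g (i+1) - g i) * (w (i+1) - w i) \<le> increment_const * \<bar>taub (i+1) s - taub i s\<bar> * ((w i)^2 + (w (i+1))^2)"
      unfolding g_def w_def by (rule p_increment_diff_bound) (use range in auto)
    also have "\<dots> \<le> increment_const * (dx * D1) * ((w i)^2 + (w (i+1))^2)"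
      by (intro mult_right_mono mult_left_mono D1) (auto simp: increment_const_nonneg)
    finally show ?thesis .
  qed
  note transport = second_difference_sum_bound[OF g w incr]
  have taylor: "h summable_on UNIV" "- (\<Sum>\<^sub>\<infinity>i. h i) \<le> L2 * dx^2 * D2 * S"
    using taylor_term_sum_bound[where tau = tau and taub = taub and s = s, OF range sq D2]
    by (simp_all add: h_def[abs_def] g_def w_def S_def)
  have "(\<Sum>\<^sub>\<infinity>i. dx * Rtau p p' lam dx tau taub i s)
      = (\<Sum>\<^sub>\<infinity>i. - (lam/2) * (g i * (w (i+1) - 2 * w i + w (i-1))) + - (lam/2) * h i)"
    using dx by (simp add: dx_mult_Rtau_split g_def h_def w_def)
  also have "\<dots> = (\<Sum>\<^sub>\<infinity>i. - (lam/2) * (g i * (w (i+1) - 2 * w i + w (i-1)))) + (\<Sum>\<^sub>\<infinity>i. - (lam/2) * h i)"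
    by (intro infsum_add summable_on_cmult_right transport(1) taylor(1))
  also have "\<dots> = lam/2 * (- (\<Sum>\<^sub>\<infinity>i. g i * (w (i+1) - 2 * w i + w (i-1)))) + lam/2 * (- (\<Sum>\<^sub>\<infinity>i. h i))"
    unfolding infsum_cmult_right' by simp
  also have "\<dots> \<le> lam/2 * (2 * (increment_const * (dx * D1)) * S) + lam/2 * (L2 * dx^2 * D2 * S)"
    using transport(2) taylor(2) lam unfolding S_def by (intro add_mono mult_left_mono) auto
  also have "\<dots> = lam * dx * (L2/2 * dx * D2 + increment_const * D1) * S"
    by (simp add: power2_eq_square algebra_simps)
  finally show ?thesis
    by (simp add: S_def w_def)
qed

lemma square_sum_le_phi:
  assumes tstar: "tstar > 0" and dx: "dx > 0"
      and range: "\<And>i. tau i s \<in> {c..M}" "\<And>i. taub i s \<in> {c..M}"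
      and sq: "(\<lambda>i. (tau i s - taub i s)^2) summable_on UNIV"
  shows "ennreal (dx * (m/2) * (\<Sum>\<^sub>\<infinity>i. (tau i s - taub i s)^2)) \<le> phi p tstar eps dx tau u taub ub s"
proof -
  have eta_ge: "dx * (m/2) * (tau i s - taub i s)^2 \<le> dx * eta p tstar eps tau u taub ub i s" for i
  proof -
    have "Prel p tstar (tau i s) (taub i s) \<le> - (m/2) * (tau i s - taub i s)^2"
      by (rule Prel_le_neg_square[OF tstar range(2) range(1)])
    moreover have "0 \<le> eps^2 / 2 * (u i s - ub i s)^2"
      by simp
    ultimately have "(m/2) * (tau i s - taub i s)^2 \<le> eta p tstar eps tau u taub ub i s"
      unfolding eta_def by linarith
    then show ?thesis
      using dx by (simp add: mult.assoc)
  qed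
  have "ennreal (dx * (m/2) * (\<Sum>\<^sub>\<infinity>i. (tau i s - taub i s)^2))
      = ennreal (\<Sum>\<^sub>\<infinity>i. dx * (m/2) * (tau i s - taub i s)^2)"
    by (simp only: infsum_cmult_right')
  also have "\<dots> = (\<integral>\<^sup>+i. ennreal (dx * (m/2) * (tau i s - taub i s)^2) \<partial>count_space UNIV)"
    by (rule nn_integral_count_space_eq_infsum[symmetric, OF summable_on_cmult_right[OF sq]])
       (use dx m_pos in auto)
  also have "\<dots> \<le> phi p tstar eps dx tau u taub ub s"
    unfolding phi_def by (rule nn_integral_mono) (use eta_ge in \<open>auto intro: ennreal_leI\<close>)
  finally show ?thesis .
qed

definition remainder_const :: real where
  "remainder_const = max 1 (max (L2/m) (2 * increment_const / m))"

lemma remainder_const_pos: "0 < remainder_const"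
  by (simp add: remainder_const_def)

lemma Rtau_sum_le_phi:
  assumes tstar: "tstar > 0" and lam: "lam > 0" and dx: "dx > 0" and T: "T > 0"
      and range: "\<forall>i. \<forall>s\<in>{0..<T}. tau i s \<in> {c..M} \<and> taub i s \<in> {c..M}"
      and sq: "\<forall>s\<in>{0..<T}. (\<lambda>i. (tau i s - taub i s)^2) summable_on UNIV"
      and bdd2: "bdd_above (Dxx_set T dx taub)" and bdd1: "bdd_above (Dx_set T dx taub)"
      and s: "s \<in> {0..<T}"
  shows "ennreal (max (\<Sum>\<^sub>\<infinity>i. dx * Rtau p p' lam dx tau taub i s) 0)
           \<le> ennreal (lam * (remainder_const * dx * Dxx_norm T dx taub + remainder_const * Dx_norm T dx taub))
              * phi p tstar eps dx tau u taub ub s"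
proof -
  define D1 where "D1 = Dx_norm T dx taub"
  define D2 where "D2 = Dxx_norm T dx taub"
  define S where "S = (\<Sum>\<^sub>\<infinity>i. (tau i s - taub i s)^2)"
  define K where "K = lam * (remainder_const * dx * D2 + remainder_const * D1)"
  have D1: "D1 \<ge> 0" and D2: "D2 \<ge> 0"
    using Dx_norm_nonneg[OF bdd1 T] Dxx_norm_nonneg[OF bdd2 T] by (simp_all add: D1_def D2_def)
  have X: "0 \<le> dx * (m/2) * S"
    using dx m_pos by (simp add: S_def infsum_nonneg)
  have K: "0 \<le> K"
    using lam dx D1 D2 remainder_const_pos by (simp add: K_def)
  have "(\<Sum>\<^sub>\<infinity>i. dx * Rtau p p' lam dx tau taub i s) \<le> lam * dx * (L2/2 * dx * D2 + increment_const * D1) * S"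
    unfolding S_def D1_def D2_def
    by (rule infsum_Rtau_le)
       (use range sq s Dx_norm_bound[OF bdd1 dx s] Dxx_norm_bound[OF bdd2 dx s] dx lam in auto)
  also have "\<dots> = lam * ((L2/m) * dx * D2 + (2 * increment_const / m) * D1) * (dx * (m/2) * S)"
    using m_pos by (simp add: field_simps)
  also have "\<dots> \<le> K * (dx * (m/2) * S)"
    unfolding K_def using lam dx D1 D2 X
    by (intro mult_right_mono mult_left_mono add_mono) (auto simp: remainder_const_def)
  finally have "max (\<Sum>\<^sub>\<infinity>i. dx * Rtau p p' lam dx tau taub i s) 0 \<le> K * (dx * (m/2) * S)"
    using mult_nonneg_nonneg[OF K X] by (rule max.boundedI)
  then have "ennreal (max (\<Sum>\<^sub>\<infinity>i. dx * Rtau p p' lam dx tau taub i s) 0) \<le> ennreal (K * (dx * (m/2) * S))"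
    by (rule ennreal_leI)
  also have "\<dots> = ennreal K * ennreal (dx * (m/2) * S)"
    by (rule ennreal_mult[OF K X])
  also have "\<dots> \<le> ennreal K * phi p tstar eps dx tau u taub ub s"
    unfolding S_def by (rule mult_left_mono[OF square_sum_le_phi]) (use tstar dx range sq s in auto)
  finally show ?thesis
    by (simp add: K_def D1_def D2_def)
qed

lemma Rtau_integral_le:
  assumes tstar: "tstar > 0" and lam: "lam > 0" and dx: "dx > 0" and T: "T > 0"
      and range: "\<forall>i. \<forall>s\<in>{0..<T}. tau i s \<in> {c..M} \<and> taub i s \<in> {c..M}"
      and sq: "\<forall>s\<in>{0..<T}. (\<lambda>i. (tau i s - taub i s)^2) summable_on UNIV"
      and finite: "set_nn_integral lborel {0..<T} (phi p tstar eps dx tau u taub ub) < \<infinity>"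
      and bdd2: "bdd_above (Dxx_set T dx taub)" and bdd1: "bdd_above (Dx_set T dx taub)"
      and t: "t \<in> {0..<T}"
  shows "(LINT s:{0..t}|lborel. (\<Sum>\<^sub>\<infinity>i. dx * Rtau p p' lam dx tau taub i s))
           \<le> lam * (remainder_const * dx * Dxx_norm T dx taub + remainder_const * Dx_norm T dx taub)
              * enn2real (set_nn_integral lborel {0..t} (phi p tstar eps dx tau u taub ub))"
proof (rule set_integral_le_if_nn_bound)
  show "0 \<le> lam * (remainder_const * dx * Dxx_norm T dx taub + remainder_const * Dx_norm T dx taub)"
    using lam dx remainder_const_pos Dx_norm_nonneg[OF bdd1 T] Dxx_norm_nonneg[OF bdd2 T] by simp
  show "ennreal (max (\<Sum>\<^sub>\<infinity>i. dx * Rtau p p' lam dx tau taub i s) 0)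
      \<le> ennreal (lam * (remainder_const * dx * Dxx_norm T dx taub + remainder_const * Dx_norm T dx taub))
         * phi p tstar eps dx tau u taub ub s" if "s \<in> {0..t}" for s
    by (rule Rtau_sum_le_phi[OF tstar lam dx T range sq bdd2 bdd1]) (use that t in auto)
  have "set_nn_integral lborel {0..t} (phi p tstar eps dx tau u taub ub)
      \<le> set_nn_integral lborel {0..<T} (phi p tstar eps dx tau u taub ub)"
    using t by (intro nn_integral_mono) (auto split: split_indicator)
  then show "set_nn_integral lborel {0..t} (phi p tstar eps dx tau u taub ub) < \<infinity>"
    using finite by (simp add: order_le_less_trans)
qed

end

lemma pressure_bounds_exist:
  assumes p_deriv: "\<forall>x>0. (p has_real_derivative p' x) (at x)"
      and p'_deriv: "\<forall>x>0. (p' has_real_derivative p'' x) (at x)"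
      and p''_cont: "continuous_on {0<..} p''"
      and p'_neg: "\<forall>x>0. p' x < 0"
      and c: "0 < c" "c < M"
  obtains m L1 L2 where "pressure_bounds p p' p'' c M m L1 L2"
proof -
  have "continuous_on {0<..} p'"
    by (rule continuous_at_imp_continuous_on) (use p'_deriv in \<open>auto intro: DERIV_isCont\<close>)
  then have p'_cont: "continuous_on {c..M} p'"
    by (rule continuous_on_subset) (use c in auto)
  obtain x0 where x0: "x0 \<in> {c..M}" "\<forall>y\<in>{c..M}. p' y \<le> p' x0"
    using continuous_attains_sup[OF _ _ p'_cont] c by auto
  obtain x1 where x1: "\<forall>y\<in>{c..M}. norm (p' y) \<le> norm (p' x1)"
    using continuous_attains_sup[OF _ _ continuous_on_norm[OF p'_cont]] c by auto
  have p''_cont': "continuous_on {c/2..M + c/2} p''"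
    by (rule continuous_on_subset[OF p''_cont]) (use c in auto)
  obtain x2 where x2: "\<forall>y\<in>{c/2..M + c/2}. norm (p'' y) \<le> norm (p'' x2)"
    using continuous_attains_sup[OF _ _ continuous_on_norm[OF p''_cont']] c by auto
  show thesis
  proof (rule that[of "- p' x0" "\<bar>p' x1\<bar>" "\<bar>p'' x2\<bar>"], unfold_locales)
    show "0 < - p' x0"
      using p'_neg x0(1) c by auto
  qed (use p_deriv p'_deriv p'_neg c x0 x1 x2 in auto)
qed

theorem lemma3p4:
  fixes p p' p'' :: "real \<Rightarrow> real" and c M :: real
  assumes p_deriv: "\<forall>x>0. (p has_real_derivative p' x) (at x)"
      and p'_deriv: "\<forall>x>0. (p' has_real_derivative p'' x) (at x)"
      and p''_cont: "continuous_on {0<..} p''"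
      and p_pos: "\<forall>x>0. p x > 0"
      and p'_neg: "\<forall>x>0. p' x < 0"
      and cM: "0 < c" "c < M"
  shows "\<exists>C>0. \<forall>tstar eps lam dx T
           (tau :: int \<Rightarrow> real \<Rightarrow> real) (u :: int \<Rightarrow> real \<Rightarrow> real)
           (taub :: int \<Rightarrow> real \<Rightarrow> real) (ub :: int \<Rightarrow> real \<Rightarrow> real).
      tstar > 0 \<longrightarrow> eps > 0 \<longrightarrow> lam > 0 \<longrightarrow> dx > 0 \<longrightarrow> T > 0 \<longrightarrow>
      (\<forall>i. tau i \<in> borel_measurable (restrict_space lborel {0..<T})) \<longrightarrow>
      (\<forall>i. u i \<in> borel_measurable (restrict_space lborel {0..<T})) \<longrightarrow>
      (\<forall>i. taub i \<in> borel_measurable (restrict_space lborel {0..<T})) \<longrightarrow>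
      (\<forall>i. ub i \<in> borel_measurable (restrict_space lborel {0..<T})) \<longrightarrow>
      (\<forall>i. \<forall>s\<in>{0..<T}. tau i s \<in> {c..M} \<and> taub i s \<in> {c..M}) \<longrightarrow>
      (\<forall>s\<in>{0..<T}. (\<lambda>i. (tau i s - taub i s)^2) summable_on UNIV) \<longrightarrow>
      set_nn_integral lborel {0..<T} (phi p tstar eps dx tau u taub ub) < \<infinity> \<longrightarrow>
      bdd_above (Dxx_set T dx taub) \<longrightarrow>
      bdd_above (Dx_set T dx taub) \<longrightarrow>
      (\<forall>t\<in>{0..<T}.
         (LINT s:{0..t}|lborel. (\<Sum>\<^sub>\<infinity>i. dx * Rtau p p' lam dx tau taub i s))
         \<le> lam * (C * dx * Dxx_norm T dx taub + C * Dx_norm T dx taub)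
               * enn2real (set_nn_integral lborel {0..t} (phi p tstar eps dx tau u taub ub)))"
proof -
  obtain m L1 L2 where "pressure_bounds p p' p'' c M m L1 L2"
    using pressure_bounds_exist[OF p_deriv p'_deriv p''_cont p'_neg cM] .
  then interpret pressure_bounds p p' p'' c M m L1 L2 .
  show ?thesis
    by (intro exI[of _ remainder_const] conjI allI impI ballI remainder_const_pos Rtau_integral_le)
      auto
qed

end
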